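(* Let $p\in(0,1)$ and let $(\lambda_n)_{n\ge1}$ be a sequence with $\lambda_1=1$ and $0\le\lambda_n\le\lambda_{n-1}$ for all $n>1$. Let $r_1,r_2,\dots$ be $\{0,1\}$-valued random variables with $\Pr(r_1=1)=p$ and, for every $n\ge2$, $\Pr(r_n=1\mid r_1,\dots,r_{n-1})=\lambda_n p+(1-\lambda_n)\bar p_{n-1}$, where $\bar p_m=\frac1m\sum_{i=1}^m r_i$. For values $\hat\lambda_k\in(0,1]$, $k\ge2$, define $\hat r_1=r_1$ and $\hat r_k=\frac{r_k-(1-\hat\lambda_k)\bar p_{k-1}}{\hat\lambda_k}$ for $k\ge2$. Let $i>j\ge1$ with $\lambda_i>0$ and $\hat\lambda_i=\lambda_i$. Then $\hat r_i$ and $\hat r_j$ are uncorrelated, i.e. $\mathbb{E}[\hat r_i\hat r_j]=\mathbb{E}[\hat r_i]\,\mathbb{E}[\hat r_j]$. *)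

theory Defs
  imports "HOL-Probability.Probability"
begin

definition pbar :: "(nat \<Rightarrow> 'a \<Rightarrow> real) \<Rightarrow> nat \<Rightarrow> 'a \<Rightarrow> real" where
  "pbar r m x = (\<Sum>i=1..m. r i x) / real m"

definition rhat :: "(nat \<Rightarrow> real) \<Rightarrow> (nat \<Rightarrow> 'a \<Rightarrow> real) \<Rightarrow> nat \<Rightarrow> 'a \<Rightarrow> real" where
  "rhat lh r k x = (if k = 1 then r 1 x else (r k x - (1 - lh k) * pbar r (k - 1) x) / lh k)"

end

theory Submission
  imports Defs
begin

text \<open>
  Put m = i - 1. The history (r_1, ..., r_m) takes only finitely many values, and on each of its
  level sets the prescribed conditional law of r_i makes the debiasing exact when lh_i = lam_i:
  the integral of rhat_i over the level set is p times its probability. Thus rhat_i has constant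
  conditional mean p given the history, and is therefore uncorrelated with every function of the
  history, in particular with rhat_j for j \<le> m.
\<close>

lemma integral_mult_fun_finite_valued:
  fixes f :: "'a \<Rightarrow> real" and X :: "'a \<Rightarrow> 'b" and G :: "'b \<Rightarrow> real"
  assumes "finite B" and "\<And>x. x \<in> space M \<Longrightarrow> X x \<in> B"
    and "\<And>b. b \<in> B \<Longrightarrow> {x \<in> space M. X x = b} \<in> sets M"
    and "integrable M f"
  shows "(\<integral>x. f x * G (X x) \<partial>M) = (\<Sum>b\<in>B. G b * (\<integral>x\<in>{x \<in> space M. X x = b}. f x \<partial>M))"
proof -
  have "f x * G (X x) = (\<Sum>b\<in>B. G b * (indicator {x \<in> space M. X x = b} x * f x))"
    if "x \<in> space M" for x
  proof -
    have "(\<Sum>b\<in>B. G b * (indicator {x \<in> space M. X x = b} x * f x))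
        = (\<Sum>b\<in>B. if b = X x then G b * f x else 0)"
      using that by (intro sum.cong) (auto split: split_indicator)
    then show ?thesis
      using assms(1,2) that by simp
  qed
  then have "(\<integral>x. f x * G (X x) \<partial>M)
      = (\<integral>x. (\<Sum>b\<in>B. G b * (indicator {x \<in> space M. X x = b} x * f x)) \<partial>M)"
    by (intro Bochner_Integration.integral_cong) auto
  also have "\<dots> = (\<Sum>b\<in>B. G b * (\<integral>x\<in>{x \<in> space M. X x = b}. f x \<partial>M))"
    using assms(3,4)
    by (subst Bochner_Integration.integral_sum)
      (auto simp: set_lebesgue_integral_def
        intro!: integrable_mult_indicator[where 'b = real, simplified])
  finally show ?thesis .
qed

lemma (in prob_space) uncorrelated_if_const_cond_mean:
  fixes f :: "'a \<Rightarrow> real" and X :: "'a \<Rightarrow> 'b" and G :: "'b \<Rightarrow> real"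
  assumes "finite B" and "\<And>x. x \<in> space M \<Longrightarrow> X x \<in> B"
    and "\<And>b. b \<in> B \<Longrightarrow> {x \<in> space M. X x = b} \<in> sets M"
    and "integrable M f"
    and "\<And>b. b \<in> B \<Longrightarrow> (\<integral>x\<in>{x \<in> space M. X x = b}. f x \<partial>M) = c * prob {x \<in> space M. X x = b}"
  shows "expectation (\<lambda>x. f x * G (X x)) = expectation f * expectation (\<lambda>x. G (X x))"
proof -
  have "expectation (\<lambda>x. f x * H (X x)) = c * expectation (\<lambda>x. H (X x))"
    for H :: "'b \<Rightarrow> real"
  proof -
    have "expectation (\<lambda>x. f x * H (X x)) = c * (\<Sum>b\<in>B. H b * prob {x \<in> space M. X x = b})"
      using assms by (simp add: integral_mult_fun_finite_valued sum_distrib_left mult_ac)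
    also have "(\<Sum>b\<in>B. H b * prob {x \<in> space M. X x = b}) = expectation (\<lambda>x. 1 * H (X x))"
      using assms(1-3)
      by (subst integral_mult_fun_finite_valued[where B = B]) (auto simp: set_integral_const)
    finally show ?thesis by simp
  qed
  from this[of G] this[of "\<lambda>_. 1"] show ?thesis
    by (simp add: prob_space)
qed

lemma (in finite_measure) integrable_zero_one_valued:
  fixes Y :: "'a \<Rightarrow> real"
  assumes "Y \<in> borel_measurable M" and "\<And>x. x \<in> space M \<Longrightarrow> Y x \<in> {0, 1}"
  shows "integrable M Y"
proof (rule integrable_const_bound[where B = 1])
  show "AE x in M. norm (Y x) \<le> 1"
    using assms(2) by (intro AE_I2) fastforce
qed (rule assms(1))

lemma (in finite_measure) set_integral_zero_one_valued:
  fixes Y :: "'a \<Rightarrow> real"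
  assumes "A \<in> sets M" and "\<And>x. x \<in> A \<Longrightarrow> Y x \<in> {0, 1}"
  shows "(\<integral>x\<in>A. Y x \<partial>M) = measure M {x \<in> A. Y x = 1}"
proof -
  have "(\<integral>x\<in>A. Y x \<partial>M) = (\<integral>x. indicator {x \<in> A. Y x = 1} x \<partial>M)"
    unfolding set_lebesgue_integral_def
    using assms(2) by (intro Bochner_Integration.integral_cong) (auto split: split_indicator)
  also have "\<dots> = measure M {x \<in> A. Y x = 1}"
    using sets.sets_into_space[OF assms(1)] by (simp add: Int_absorb2 subset_eq)
  finally show ?thesis .
qed

lemma (in finite_measure) set_integral_debiased_zero_one:
  fixes Y :: "'a \<Rightarrow> real"
  assumes "A \<in> sets M" and "Y \<in> borel_measurable M" and "\<And>x. x \<in> space M \<Longrightarrow> Y x \<in> {0, 1}"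
    and "measure M {x \<in> A. Y x = 1} = (l * p + (1 - l) * q) * measure M A" and "l \<noteq> 0"
  shows "(\<integral>x\<in>A. (Y x - (1 - l) * q) / l \<partial>M) = p * measure M A"
proof -
  have "integrable M Y"
    using assms(2,3) by (rule integrable_zero_one_valued)
  then have "set_integrable M A Y"
    unfolding set_integrable_def by (rule integrable_mult_indicator[OF assms(1)])
  moreover have "set_integrable M A (\<lambda>_. (1 - l) * q)"
    unfolding set_integrable_def by (rule integrable_mult_indicator[OF assms(1) integrable_const])
  ultimately have "(\<integral>x\<in>A. (Y x - (1 - l) * q) / l \<partial>M)
      = ((\<integral>x\<in>A. Y x \<partial>M) - (1 - l) * q * measure M A) / l"
    using assms(1) by (simp add: set_integral_diff set_integral_const)
  also have "\<dots> = ((l * p + (1 - l) * q) * measure M A - (1 - l) * q * measure M A) / l"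
    using assms(1,3,4) sets.sets_into_space[OF assms(1)]
    by (subst set_integral_zero_one_valued) auto
  also have "\<dots> = p * measure M A"
    using assms(5) by (simp add: algebra_simps)
  finally show ?thesis .
qed

definition history :: "(nat \<Rightarrow> 'a \<Rightarrow> 'b) \<Rightarrow> nat \<Rightarrow> 'a \<Rightarrow> nat \<Rightarrow> 'b" where
  "history r m x = (\<lambda>k\<in>{1..m}. r k x)"

lemma history_eq_iff:
  "history r m x = b \<longleftrightarrow> b \<in> extensional {1..m} \<and> (\<forall>k\<in>{1..m}. r k x = b k)"
  unfolding history_def by (auto simp: extensional_def fun_eq_iff)

lemma sets_history_eq:
  fixes r :: "nat \<Rightarrow> 'a \<Rightarrow> real"
  assumes "\<And>k. k \<in> {1..m} \<Longrightarrow> r k \<in> borel_measurable M"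
  shows "{x \<in> space M. history r m x = b} \<in> sets M"
proof (cases "b \<in> extensional {1..m}")
  case True
  have "{x \<in> space M. \<forall>k\<in>{1..m}. r k x = b k} \<in> sets M"
  proof (rule sets.sets_Collect_finite_All)
    fix k assume "k \<in> {1..m}"
    then have [measurable]: "r k \<in> borel_measurable M"
      by (rule assms)
    show "{x \<in> space M. r k x = b k} \<in> sets M"
      by measurable
  qed simp
  with True show ?thesis
    by (simp add: history_eq_iff)
qed (simp add: history_eq_iff)

lemma pbar_cong:
  assumes "\<And>k. k \<in> {1..m} \<Longrightarrow> r k x = s k y"
  shows "pbar r m x = pbar s m y"
  unfolding pbar_def using assms by (intro arg_cong[where f = "\<lambda>s. s / real m"] sum.cong) auto

lemma rhat_cong:
  assumes "1 \<le> j" and "\<And>k. k \<in> {1..j} \<Longrightarrow> r k x = s k y"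
  shows "rhat lh r j x = rhat lh s j y"
proof -
  have "pbar r (j - 1) x = pbar s (j - 1) y"
    by (rule pbar_cong) (use assms(2) in auto)
  then show ?thesis
    using assms by (simp add: rhat_def)
qed

lemma integrable_rhat:
  assumes "1 \<le> j" and "\<And>k. k \<in> {1..j} \<Longrightarrow> integrable M (r k)"
  shows "integrable M (rhat lh r j)"
proof (cases "j = 1")
  case True
  then show ?thesis
    using assms(2) by (simp add: rhat_def[abs_def])
next
  case False
  have "integrable M (\<lambda>x. \<Sum>k=1..j - 1. r k x)"
    using assms(2) by (intro Bochner_Integration.integrable_sum) auto
  then have "integrable M (pbar r (j - 1))"
    unfolding pbar_def[abs_def] by simp
  with False show ?thesis
    using assms by (simp add: rhat_def[abs_def])
qed

lemma (in finite_measure) set_integral_rhat_history: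
  fixes r :: "nat \<Rightarrow> 'a \<Rightarrow> real"
  assumes "1 \<le> m" and "lh (Suc m) \<noteq> 0"
    and "\<And>k. k \<in> {1..Suc m} \<Longrightarrow> r k \<in> borel_measurable M"
    and "\<And>x. x \<in> space M \<Longrightarrow> r (Suc m) x \<in> {0, 1}"
    and "measure M {x \<in> space M. r (Suc m) x = 1 \<and> history r m x = b}
      = (lh (Suc m) * p + (1 - lh (Suc m)) * pbar (\<lambda>k _. b k) m ())
        * measure M {x \<in> space M. history r m x = b}"
  shows "(\<integral>x\<in>{x \<in> space M. history r m x = b}. rhat lh r (Suc m) x \<partial>M)
    = p * measure M {x \<in> space M. history r m x = b}"
proof -
  let ?A = "{x \<in> space M. history r m x = b}"
  let ?q = "pbar (\<lambda>k _. b k) m ()"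
  have A: "?A \<in> sets M"
    using assms(3) by (intro sets_history_eq) auto
  have "(\<integral>x\<in>?A. rhat lh r (Suc m) x \<partial>M)
      = (\<integral>x\<in>?A. (r (Suc m) x - (1 - lh (Suc m)) * ?q) / lh (Suc m) \<partial>M)"
    using A assms(1)
    by (intro set_lebesgue_integral_cong) (auto simp: rhat_def history_eq_iff intro!: pbar_cong)
  also have "\<dots> = p * measure M ?A"
  proof (rule set_integral_debiased_zero_one)
    have "{x \<in> ?A. r (Suc m) x = 1} = {x \<in> space M. r (Suc m) x = 1 \<and> history r m x = b}"
      by blast
    with assms(5) show "measure M {x \<in> ?A. r (Suc m) x = 1}
        = (lh (Suc m) * p + (1 - lh (Suc m)) * ?q) * measure M ?A"
      by simp
  qed (use A assms(2-4) in auto)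
  finally show ?thesis .
qed

theorem lemmaA12:
  fixes M :: "'a measure" and p :: real and lam lh :: "nat \<Rightarrow> real"
    and r :: "nat \<Rightarrow> 'a \<Rightarrow> real" and i j :: nat
  assumes "prob_space M"
    and "0 < p" "p < 1"
    and "lam 1 = 1"
    and "\<And>n. n > 1 \<Longrightarrow> 0 \<le> lam n \<and> lam n \<le> lam (n - 1)"
    and "\<And>n. n \<ge> 1 \<Longrightarrow> r n \<in> borel_measurable M"
    and "\<And>n x. n \<ge> 1 \<Longrightarrow> x \<in> space M \<Longrightarrow> r n x \<in> {0, 1}"
    and "measure M {x \<in> space M. r 1 x = 1} = p"
    and "\<And>n b. n \<ge> 2 \<Longrightarrow> (\<forall>k\<in>{1..n-1}. b k \<in> {0, 1}) \<Longrightarrow>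
           measure M {x \<in> space M. r n x = 1 \<and> (\<forall>k\<in>{1..n-1}. r k x = b k)}
           = (lam n * p + (1 - lam n) * ((\<Sum>k=1..n-1. b k) / real (n - 1)))
             * measure M {x \<in> space M. \<forall>k\<in>{1..n-1}. r k x = b k}"
    and "\<And>k. k \<ge> 2 \<Longrightarrow> 0 < lh k \<and> lh k \<le> 1"
    and "1 \<le> j" "j < i"
    and "lam i > 0"
    and "lh i = lam i"
  shows "integral\<^sup>L M (\<lambda>x. rhat lh r i x * rhat lh r j x)
         = integral\<^sup>L M (rhat lh r i) * integral\<^sup>L M (rhat lh r j)"
proof -
  interpret prob_space M by fact
  define m where "m = i - 1"
  define B where "B = PiE {1..m} (\<lambda>_. {0, 1 :: real})"
  have i: "i = Suc m" "1 \<le> m" "j \<in> {1..m}"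
    using assms(11,12) by (auto simp: m_def)
  have cond_prob: "prob {x \<in> space M. r i x = 1 \<and> history r m x = b}
      = (lh i * p + (1 - lh i) * pbar (\<lambda>k _. b k) m ())
        * prob {x \<in> space M. history r m x = b}"
    if "b \<in> B" for b
  proof -
    have "b \<in> extensional {1..m}" "\<forall>k\<in>{1..m}. b k \<in> {0, 1}"
      using that by (auto simp: B_def PiE_iff)
    then show ?thesis
      using assms(9)[of i b] assms(14) i(1,2)
      by (simp add: history_eq_iff pbar_def conj_commute)
  qed
  have history_sets: "{x \<in> space M. history r m x = b} \<in> sets M" for b
    using assms(6) by (intro sets_history_eq) auto
  have rhat_j: "rhat lh r j = (\<lambda>x. rhat lh (\<lambda>k _. history r m x k) j ())"
    using i(3) by (intro ext rhat_cong) (auto simp: history_def)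
  show ?thesis
    unfolding rhat_j
  proof (rule uncorrelated_if_const_cond_mean[where B = B and c = p, OF _ _ history_sets])
    show "finite B"
      by (simp add: B_def finite_PiE)
    show "history r m x \<in> B" if "x \<in> space M" for x
      using assms(7) that by (simp add: B_def history_def restrict_PiE_iff)
    show "integrable M (rhat lh r i)"
      using i(1) assms(6,7) by (intro integrable_rhat integrable_zero_one_valued) auto
    show "(\<integral>x\<in>{x \<in> space M. history r m x = b}. rhat lh r i x \<partial>M)
        = p * prob {x \<in> space M. history r m x = b}" if "b \<in> B" for b
      using i(2) assms(6,7,13,14) cond_prob[OF that] unfolding i(1)
      by (intro set_integral_rhat_history) auto
  qed
qed

end
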